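(* For any $(a,b,c,\lambda,\delta),(\bar a,\bar b,\bar c,\bar\lambda,\bar\delta)\in(\mathbb F^\times)^4\times\mathbb F$ and any nonzero $\bar w\in W_{\bar\lambda}^{\bar\delta}(\bar a,\bar b,\bar c)$, there exists a $\triangle_q$-module homomorphism $W_\lambda^\delta(a,b,c)\to W_{\bar\lambda}^{\bar\delta}(\bar a,\bar b,\bar c)$ sending $w_0$ to $\bar w$ if and only if (i) there exists a $\triangle_q$-module homomorphism $M_\lambda(a,b,c)\to W_{\bar\lambda}^{\bar\delta}(\bar a,\bar b,\bar c)$ sending $m_0$ to $\bar w$, and (ii) $\delta+a^{d'}\lambda^{-d'}+a^{-d'}\lambda^{d'}=\bar\delta+\bar a^{d'}\bar\lambda^{-d'}+\bar a^{-d'}\bar\lambda^{d'}$.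
   Context: $\mathbb F$ is an algebraically closed field and $q\in\mathbb F^\times$ a root of unity of order $d\notin\{1,2,4\}$; $d'=d$ if $d$ odd, $d'=d/2$ if $d$ even. $\triangle_q$ is the unital associative $\mathbb F$-algebra with generators $A,B,C$ subject to: each of $A+\frac{qBC-q^{-1}CB}{q^2-q^{-2}}$, $B+\frac{qCA-q^{-1}AC}{q^2-q^{-2}}$, $C+\frac{qAB-q^{-1}BA}{q^2-q^{-2}}$ is central; $\alpha,\beta,\gamma$ are these times $q+q^{-1}$. For $(a,b,c,\lambda)\in(\mathbb F^\times)^4$, $i\in\mathbb N$: $\theta_i=a\lambda^{-1}q^{2i}+a^{-1}\lambda q^{-2i}$, $\theta_i^*=b\lambda^{-1}q^{2i}+b^{-1}\lambda q^{-2i}$, $\varphi_i=a^{-1}b^{-1}\lambda q(q^i-q^{-i})(\lambda^{-1}q^{i-1}-\lambda q^{1-i})(q^{-i}-abc\lambda^{-1}q^{i-1})(q^{-i}-abc^{-1}\lambda^{-1}q^{i-1})$. $M_\lambda(a,b,c)$ has basis $\{m_i\}_{i\in\mathbb N}$, $(A-\theta_i)m_i=m_{i+1}$, $(B-\theta_i^* )m_i=\varphi_im_{i-1}$, $\alpha,\beta,\gamma$ acting as $(b+b^{-1})(c+c^{-1})+(a+a^{-1})(\lambda q+\lambda^{-1}q^{-1})$, $(c+c^{-1})(a+a^{-1})+(b+b^{-1})(\lambda q+\lambda^{-1}q^{-1})$, $(a+a^{-1})(b+b^{-1})+(c+c^{-1})(\lambda q+\lambda^{-1}q^{-1})$. For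 $\delta\in\mathbb F$, $W_\lambda^\delta(a,b,c)$ is the quotient of $M_\lambda(a,b,c)$ by the span of $\{\delta m_i-m_{d'+i}\}_{i\in\mathbb N}$, and $w_i$ denotes the image of $m_i$. Barred symbols denote the same objects for the barred parameters. *)

theory Defs
  imports Complex_Main "HOL-Computational_Algebra.Polynomial"
begin

record ('a, 'v) tmod =
  car :: "'v set"
  add :: "'v \<Rightarrow> 'v \<Rightarrow> 'v"
  smul :: "'a \<Rightarrow> 'v \<Rightarrow> 'v"
  zer :: "'v"
  actA :: "'v \<Rightarrow> 'v"
  actB :: "'v \<Rightarrow> 'v"
  actC :: "'v \<Rightarrow> 'v"

definition tri_hom :: "('a, 'v) tmod \<Rightarrow> ('a, 'w) tmod \<Rightarrow> ('v \<Rightarrow> 'w) \<Rightarrow> bool" where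
  "tri_hom M N f \<longleftrightarrow>
     (\<forall>x\<in>car M. f x \<in> car N) \<and>
     (\<forall>x\<in>car M. \<forall>y\<in>car M. f (add M x y) = add N (f x) (f y)) \<and>
     (\<forall>c. \<forall>x\<in>car M. f (smul M c x) = smul N c (f x)) \<and>
     (\<forall>x\<in>car M. f (actA M x) = actA N (f x)) \<and>
     (\<forall>x\<in>car M. f (actB M x) = actB N (f x)) \<and>
     (\<forall>x\<in>car M. f (actC M x) = actC N (f x))"

text \<open>d' from the order d of q.\<close>
definition dprime :: "nat \<Rightarrow> nat" where
  "dprime d = (if even d then d div 2 else d)"

definition theta :: "'a::field \<Rightarrow> 'a \<Rightarrow> 'a \<Rightarrow> nat \<Rightarrow> 'a" where
  "theta q a lam i = a * inverse lam * q ^ (2*i) + inverse a * lam * inverse q ^ (2*i)"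

definition thetas :: "'a::field \<Rightarrow> 'a \<Rightarrow> 'a \<Rightarrow> nat \<Rightarrow> 'a" where
  "thetas q b lam i = b * inverse lam * q ^ (2*i) + inverse b * lam * inverse q ^ (2*i)"

definition phi :: "'a::field \<Rightarrow> 'a \<Rightarrow> 'a \<Rightarrow> 'a \<Rightarrow> 'a \<Rightarrow> nat \<Rightarrow> 'a" where
  "phi q a b c lam i =
     inverse a * inverse b * lam * q * (q ^ i - inverse q ^ i)
     * (inverse lam * q powi (int i - 1) - lam * q powi (1 - int i))
     * (inverse q ^ i - a * b * c * inverse lam * q powi (int i - 1))
     * (inverse q ^ i - a * b * inverse c * inverse lam * q powi (int i - 1))"

text \<open>Action of gamma on M (a scalar).\<close>
definition gammaM :: "'a::field \<Rightarrow> 'a \<Rightarrow> 'a \<Rightarrow> 'a \<Rightarrow> 'a \<Rightarrow> 'a" where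
  "gammaM q a b c lam = (a + inverse a) * (b + inverse b)
      + (c + inverse c) * (lam * q + inverse lam * inverse q)"

text \<open>M_lambda(a,b,c) is modelled on polynomials: m_i corresponds to monom 1 i.\<close>
definition MA :: "'a::field \<Rightarrow> 'a \<Rightarrow> 'a \<Rightarrow> 'a poly \<Rightarrow> 'a poly" where
  "MA q a lam p = (\<Sum>i\<le>degree p. smult (coeff p i)
       (smult (theta q a lam i) (monom 1 i) + monom 1 (Suc i)))"

definition MB :: "'a::field \<Rightarrow> 'a \<Rightarrow> 'a \<Rightarrow> 'a \<Rightarrow> 'a \<Rightarrow> 'a poly \<Rightarrow> 'a poly" where
  "MB q a b c lam p = (\<Sum>i\<le>degree p. smult (coeff p i)
       (smult (thetas q b lam i) (monom 1 i)
        + (if i = 0 then 0 else smult (phi q a b c lam i) (monom 1 (i - 1)))))"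

text \<open>C is determined by the centrality relation:
  gamma/(q+q^-1) = C + (qAB - q^-1 BA)/(q^2-q^-2).\<close>
definition MC :: "'a::field \<Rightarrow> 'a \<Rightarrow> 'a \<Rightarrow> 'a \<Rightarrow> 'a \<Rightarrow> 'a poly \<Rightarrow> 'a poly" where
  "MC q a b c lam p =
     smult (gammaM q a b c lam / (q + inverse q)) p
     - smult (1 / (q^2 - inverse q ^ 2))
         (smult q (MA q a lam (MB q a b c lam p)) - smult (inverse q) (MB q a b c lam (MA q a lam p)))"

definition Mmod :: "'a::field \<Rightarrow> 'a \<Rightarrow> 'a \<Rightarrow> 'a \<Rightarrow> 'a \<Rightarrow> ('a, 'a poly) tmod" where
  "Mmod q a b c lam = \<lparr> car = UNIV, add = (+), smul = smult, zer = 0,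
      actA = MA q a lam, actB = MB q a b c lam, actC = MC q a b c lam \<rparr>"

definition Wspan :: "nat \<Rightarrow> 'a::field \<Rightarrow> 'a poly set" where
  "Wspan d delta = {(\<Sum>i\<in>S. smult (k i) (smult delta (monom 1 i) - monom 1 (dprime d + i)))
                    | S k. finite S}"

definition coset :: "nat \<Rightarrow> 'a::field \<Rightarrow> 'a poly \<Rightarrow> 'a poly set" where
  "coset d delta x = {x + n | n. n \<in> Wspan d delta}"

definition Wmod :: "'a::field \<Rightarrow> nat \<Rightarrow> 'a \<Rightarrow> 'a \<Rightarrow> 'a \<Rightarrow> 'a \<Rightarrow> 'a \<Rightarrow> ('a, 'a poly set) tmod" where
  "Wmod q d a b c lam delta = \<lparr>
      car = {coset d delta x | x. True},
      add = (\<lambda>X Y. {x + y + n | x y n. x \<in> X \<and> y \<in> Y \<and> n \<in> Wspan d delta}),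
      smul = (\<lambda>t X. {smult t x + n | x n. x \<in> X \<and> n \<in> Wspan d delta}),
      zer = Wspan d delta,
      actA = (\<lambda>X. {MA q a lam x + n | x n. x \<in> X \<and> n \<in> Wspan d delta}),
      actB = (\<lambda>X. {MB q a b c lam x + n | x n. x \<in> X \<and> n \<in> Wspan d delta}),
      actC = (\<lambda>X. {MC q a b c lam x + n | x n. x \<in> X \<and> n \<in> Wspan d delta}) \<rparr>"

end

theory Submission
  imports Defs
begin

text \<open>In the Newton basis \<open>\<Prod>j<i. (x - \<theta>\<^sub>j)\<close> the module \<open>M\<^sub>\<lambda>(a,b,c)\<close> becomes \<open>\<bbbF>[x]\<close> with \<open>A\<close>
  acting as \<open>x\<close>, so a homomorphism \<open>g\<close> from \<open>M\<close> is determined by \<open>w = g m\<^sub>0\<close>, and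
  \<open>g m\<^sub>k = (\<Prod>j<k. (A - \<theta>\<^sub>j)) w\<close>. In the monomial basis \<open>m\<^sub>i = x\<^sup>i\<close> the span defining \<open>W\<close> is the
  ideal generated by \<open>\<delta> - x\<^sup>d\<^sup>'\<close>; it is stable under \<open>A, B, C\<close> because \<open>\<theta>\<^sub>i, \<theta>\<^sup>*\<^sub>i, \<phi>\<^sub>i\<close>
  are \<open>d'\<close>-periodic and \<open>\<phi>\<^sub>d\<^sub>' = 0\<close>. Hence \<open>g\<close> factors through \<open>W\<close> iff it kills
  \<open>\<delta> m\<^sub>0 - m\<^sub>d\<^sub>'\<close>.

  Since \<open>q\<^sup>2\<close> is a primitive \<open>d'\<close>-th root of unity, \<open>\<Prod>j<d'. (x - \<theta>\<^sub>j) + T\<close> with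
  \<open>T = (a/\<lambda>)\<^sup>d\<^sup>' + (\<lambda>/a)\<^sup>d\<^sup>'\<close> is a Dickson polynomial, independent of \<open>a, \<lambda>\<close>. On the target
  \<open>W\<close>, where \<open>x\<^sup>d\<^sup>'\<close> acts as \<open>\<delta>'\<close>, the operator \<open>\<Prod>j<d'. (A - \<theta>\<^sub>j)\<close> is therefore the scalar
  \<open>\<delta>' + T' - T\<close>, and \<open>g (\<delta> m\<^sub>0 - m\<^sub>d\<^sub>') = (\<delta> + T - \<delta>' - T') w\<close>, which vanishes iff the
  stated condition holds because \<open>w \<noteq> 0\<close>.\<close>

section \<open>Roots of unity and Dickson polynomials\<close>

lemma infinite_UNIV_alg_closed: "infinite (UNIV :: 'a::alg_closed_field set)"
proof
  assume fin: "finite (UNIV :: 'a set)"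
  define p :: "'a poly" where "p = 1 + (\<Prod>x\<in>UNIV. [:-x, 1:])"
  have "degree (\<Prod>x\<in>(UNIV::'a set). [:-x, 1:]) = card (UNIV :: 'a set)"
    by (subst degree_prod_eq_sum_degree) auto
  moreover have "card (UNIV :: 'a set) > 0"
    using fin by (simp add: finite_UNIV_card_ge_0)
  ultimately have "degree p > 0"
    unfolding p_def by (metis add.commute degree_1 degree_add_eq_left)
  then obtain z where "poly p z = 0"
    using alg_closed_imp_poly_has_root by blast
  moreover have "poly (\<Prod>x\<in>(UNIV::'a set). [:-x, 1:]) z = 0"
    using fin by (simp add: poly_prod prod_zero_iff)
  ultimately show False
    unfolding p_def by simp
qed

lemma poly_eqI_alg_closed:
  fixes p r :: "'a::alg_closed_field poly"
  assumes "\<And>x. poly p x = poly r x"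
  shows "p = r"
proof (rule ccontr)
  assume "p \<noteq> r"
  then have "finite {x. poly (p - r) x = 0}"
    by (intro poly_roots_finite) simp
  moreover have "{x. poly (p - r) x = 0} = UNIV"
    using assms by auto
  ultimately show False
    using infinite_UNIV_alg_closed by auto
qed

lemma inj_on_power_primitive_root:
  fixes w :: "'a::field"
  assumes prim: "\<forall>k. 0 < k \<and> k < n \<longrightarrow> w ^ k \<noteq> 1" and "w \<noteq> 0"
  shows "inj_on (\<lambda>i. w ^ i) {..<n}"
proof (rule linorder_inj_onI')
  fix i j :: nat
  assume "i \<in> {..<n}" "j \<in> {..<n}" "i < j"
  moreover have "w ^ j = w ^ i * w ^ (j - i)"
    using \<open>i < j\<close> by (simp flip: power_add)
  ultimately show "w ^ i \<noteq> w ^ j"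
    using prim \<open>w \<noteq> 0\<close> by auto
qed

lemma prod_diff_root_unity_multiples:
  fixes w s y :: "'a::field"
  assumes n: "0 < n" and wn: "w ^ n = 1" and prim: "\<forall>k. 0 < k \<and> k < n \<longrightarrow> w ^ k \<noteq> 1"
  shows "(\<Prod>i<n. y - s * w ^ i) = y ^ n - s ^ n"
proof (cases "s = 0")
  case True
  then show ?thesis
    using n by simp
next
  case False
  have "w \<noteq> 0"
    using wn n by (metis power_0_left less_not_refl zero_neq_one)
  define P where "P = (\<Prod>i<n. [:-(s * w ^ i), 1:])"
  define R :: "'a poly" where "R = monom 1 n - [:s ^ n:]"
  define A where "A = (\<lambda>i. s * w ^ i) ` {..<n}"
  have "inj_on (\<lambda>i. s * w ^ i) {..<n}"
    using inj_on_power_primitive_root[OF prim \<open>w \<noteq> 0\<close>] False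
    by (auto simp: inj_on_def)
  then have "card A = n"
    unfolding A_def by (simp add: card_image)
  have "P = R"
  proof (rule poly_eqI_degree_lead_coeff[where n = n and A = A])
    have "degree P = n"
      unfolding P_def by (simp add: degree_prod_eq_sum_degree)
    moreover have "lead_coeff P = 1"
      unfolding P_def by (simp add: lead_coeff_prod)
    ultimately show "coeff P n = coeff R n" "degree P \<le> n"
      using n by (simp_all add: R_def coeff_pCons split: nat.split)
    show "degree R \<le> n"
      unfolding R_def by (intro degree_diff_le) (auto simp: degree_monom_eq)
    show "n \<le> card A"
      using \<open>card A = n\<close> by simp
  next
    fix z
    assume "z \<in> A"
    then obtain i where "z = s * w ^ i" "i < n"
      unfolding A_def by auto
    moreover have "(w ^ i) ^ n = 1"
      using wn by (metis power_mult power_one mult.commute)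
    ultimately show "poly P z = poly R z"
      by (auto simp: P_def R_def poly_prod prod_zero_iff poly_monom power_mult_distrib)
  qed
  then have "poly P y = poly R y"
    by simp
  then show ?thesis
    by (simp add: P_def R_def poly_prod poly_monom)
qed

lemma prod_dickson_eval:
  fixes w t y :: "'a::field"
  assumes n: "0 < n" and wn: "w ^ n = 1" and prim: "\<forall>k. 0 < k \<and> k < n \<longrightarrow> w ^ k \<noteq> 1"
    and "t \<noteq> 0" "y \<noteq> 0"
  shows "(\<Prod>i<n. y + inverse y - (t * w ^ i + inverse (t * w ^ i)))
         = y ^ n + inverse y ^ n - (t ^ n + inverse t ^ n)"
proof -
  have "w \<noteq> 0"
    using wn n by (metis power_0_left less_not_refl zero_neq_one)
  have "(\<Prod>i<n. y + inverse y - (t * w ^ i + inverse (t * w ^ i)))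
      = (\<Prod>i<n. inverse y * ((y - t * w ^ i) * (y - inverse t * inverse w ^ i)))"
    using assms \<open>w \<noteq> 0\<close> by (intro prod.cong) (auto simp: field_simps)
  also have "\<dots> = inverse y ^ n * ((\<Prod>i<n. y - t * w ^ i) * (\<Prod>i<n. y - inverse t * inverse w ^ i))"
    by (simp add: prod.distrib)
  also have "\<dots> = inverse y ^ n * ((y ^ n - t ^ n) * (y ^ n - inverse t ^ n))"
    using prod_diff_root_unity_multiples[OF n wn prim]
      prod_diff_root_unity_multiples[of n "inverse w"] n wn prim
    by (simp add: power_inverse)
  also have "\<dots> = y ^ n + inverse y ^ n - (t ^ n + inverse t ^ n)"
    using assms by (simp add: field_simps)
  finally show ?thesis .
qed

text \<open>Both sides are the Dickson polynomial \<open>D\<^sub>n\<close>, characterised by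
  \<open>D\<^sub>n(y + y\<^sup>-\<^sup>1) = y\<^sup>n + y\<^sup>-\<^sup>n\<close>.\<close>

lemma dickson_identity:
  fixes w t u :: "'a::alg_closed_field"
  assumes n: "0 < n" and wn: "w ^ n = 1" and prim: "\<forall>k. 0 < k \<and> k < n \<longrightarrow> w ^ k \<noteq> 1"
    and "t \<noteq> 0" "u \<noteq> 0"
  shows "(\<Prod>i<n. [:-(t * w ^ i + inverse (t * w ^ i)), 1:]) + [:t ^ n + inverse t ^ n:]
       = (\<Prod>i<n. [:-(u * w ^ i + inverse (u * w ^ i)), 1:]) + [:u ^ n + inverse u ^ n:]"
proof (rule poly_eqI_alg_closed)
  fix x :: 'a
  obtain y where "poly [:1, -x, 1:] y = 0"
    using alg_closed_imp_poly_has_root[of "[:1, -x, 1:]"] by auto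
  then have "1 - x * y + y * y = 0"
    by (simp add: algebra_simps)
  then have "y \<noteq> 0"
    by auto
  with \<open>1 - x * y + y * y = 0\<close> have "x = y + inverse y"
    by (simp add: field_simps)
  have "poly (\<Prod>i<n. [:-(v * w ^ i + inverse (v * w ^ i)), 1:]) x
      = (\<Prod>i<n. y + inverse y - (v * w ^ i + inverse (v * w ^ i)))" for v
    unfolding poly_prod \<open>x = y + inverse y\<close> by (simp add: algebra_simps)
  then show "poly ((\<Prod>i<n. [:-(t * w ^ i + inverse (t * w ^ i)), 1:]) + [:t ^ n + inverse t ^ n:]) x
       = poly ((\<Prod>i<n. [:-(u * w ^ i + inverse (u * w ^ i)), 1:]) + [:u ^ n + inverse u ^ n:]) x"
    using prod_dickson_eval[OF n wn prim \<open>t \<noteq> 0\<close> \<open>y \<noteq> 0\<close>]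
      prod_dickson_eval[OF n wn prim \<open>u \<noteq> 0\<close> \<open>y \<noteq> 0\<close>]
    by simp
qed

section \<open>The parameters at a root of unity\<close>

lemma dprime_pos: "0 < d \<Longrightarrow> 0 < dprime d"
  by (auto simp: dprime_def)

lemma power_double_dprime_eq_1:
  fixes q :: "'a::monoid_mult"
  assumes "q ^ d = 1"
  shows "q ^ (2 * dprime d) = 1"
proof (cases "even d")
  case True
  then show ?thesis
    using assms by (simp add: dprime_def)
next
  case False
  then show ?thesis
    using assms by (simp add: dprime_def power_mult mult.commute[of 2])
qed

lemma primitive_root_square:
  fixes q :: "'a::field"
  assumes "q ^ d = 1" and prim: "\<forall>k. 0 < k \<and> k < d \<longrightarrow> q ^ k \<noteq> 1"
  shows "\<forall>k. 0 < k \<and> k < dprime d \<longrightarrow> (q ^ 2) ^ k \<noteq> 1"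
proof (intro allI impI notI)
  fix k
  assume k: "0 < k \<and> k < dprime d" and "(q ^ 2) ^ k = 1"
  then have "q ^ (2 * k) = 1"
    by (simp add: power_mult)
  show False
  proof (cases "2 * k < d")
    case True
    then show False
      using prim k \<open>q ^ (2 * k) = 1\<close> by auto
  next
    case False
    then have "odd d"
      using k by (auto simp: dprime_def)
    then have "2 * k \<noteq> d"
      by auto
    then have "0 < 2 * k - d" "2 * k - d < d"
      using False k \<open>odd d\<close> by (auto simp: dprime_def)
    moreover have "q ^ (2 * k) = q ^ (2 * k - d) * q ^ d"
      using False by (simp flip: power_add)
    ultimately show False
      using prim \<open>q ^ d = 1\<close> \<open>q ^ (2 * k) = 1\<close> by auto
  qed
qed

lemma power_double_add_period:
  fixes q :: "'a::field"
  assumes "q ^ (2 * n) = 1"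
  shows "q ^ (2 * (n + i)) = q ^ (2 * i)" "inverse q ^ (2 * (n + i)) = inverse q ^ (2 * i)"
  using assms by (simp_all only: distrib_left power_add power_inverse) simp_all

lemma theta_add_period: "q ^ (2 * n) = 1 \<Longrightarrow> theta q a lam (n + i) = theta q a lam i"
  by (simp only: theta_def power_double_add_period)

lemma thetas_add_period: "q ^ (2 * n) = 1 \<Longrightarrow> thetas q b lam (n + i) = thetas q b lam i"
  by (simp only: thetas_def power_double_add_period)

lemma phi_period_eq_0:
  fixes q :: "'a::field"
  assumes "q ^ (2 * n) = 1"
  shows "phi q a b c lam n = 0"
proof -
  have "q ^ n * q ^ n = 1"
    using assms by (simp add: mult_2 power_add)
  then have "q ^ n = inverse q ^ n"
    by (metis inverse_unique power_inverse)
  then show ?thesis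
    by (simp add: phi_def)
qed

lemma phi_add_period:
  fixes q :: "'a::field"
  assumes "q ^ (2 * n) = 1"
  shows "phi q a b c lam (n + i) = phi q a b c lam i"
proof (cases "n = 0")
  case False
  define s where "s = q ^ n"
  have "s * s = 1"
    using assms by (simp add: s_def mult_2 power_add)
  then have "inverse s = s"
    by (rule inverse_unique)
  have "q \<noteq> 0"
    using assms False by (auto simp: power_0_left)
  have "q powi (int (n + i) - 1) = q powi ((int i - 1) + int n)"
    "q powi (1 - int (n + i)) = q powi ((1 - int i) + - int n)"
    by (simp_all add: algebra_simps)
  then have shift: "q ^ (n + i) = s * q ^ i" "inverse q ^ (n + i) = s * inverse q ^ i"
    "q powi (int (n + i) - 1) = s * q powi (int i - 1)"
    "q powi (1 - int (n + i)) = s * q powi (1 - int i)"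
    using \<open>q \<noteq> 0\<close> \<open>inverse s = s\<close>
    by (simp_all only: s_def power_add power_int_add[OF disjI1, OF \<open>q \<noteq> 0\<close>] power_int_minus
        power_int_of_nat power_inverse mult.commute)
  \<comment> \<open>each of the four \<open>q\<close>-dependent factors of \<open>phi\<close> picks up the sign \<open>s = \<plusminus>1\<close>\<close>
  have "phi q a b c lam (n + i) = (s * s) * (s * s) * phi q a b c lam i"
    unfolding phi_def shift by (simp only: right_diff_distrib mult_ac)
  then show ?thesis
    using \<open>s * s = 1\<close> by simp
qed simp

section \<open>The module M\<close>

lemma coeff_MA:
  "coeff (MA q a lam p) n = theta q a lam n * coeff p n + (if n = 0 then 0 else coeff p (n - 1))"
proof -
  have "coeff (MA q a lam p) n = (\<Sum>i\<le>degree p. (if i = n then coeff p i * theta q a lam i else 0)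
          + (if i = n - 1 then (if n = 0 then 0 else coeff p i) else 0))"
    unfolding MA_def coeff_sum by (intro sum.cong) (auto simp: coeff_monom)
  also have "\<dots> = theta q a lam n * coeff p n + (if n = 0 then 0 else coeff p (n - 1))"
    by (auto simp: sum.distrib coeff_eq_0)
  finally show ?thesis .
qed

lemma coeff_MB:
  "coeff (MB q a b c lam p) n
     = thetas q b lam n * coeff p n + phi q a b c lam (Suc n) * coeff p (Suc n)"
proof -
  have "coeff (MB q a b c lam p) n = (\<Sum>i\<le>degree p. (if i = n then coeff p i * thetas q b lam i else 0)
          + (if i = Suc n then coeff p i * phi q a b c lam i else 0))"
    unfolding MB_def coeff_sum by (intro sum.cong) (auto simp: coeff_monom)
  also have "\<dots> = thetas q b lam n * coeff p n + phi q a b c lam (Suc n) * coeff p (Suc n)"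
    by (auto simp: sum.distrib coeff_eq_0)
  finally show ?thesis .
qed

lemma MA_add: "MA q a lam (x + y) = MA q a lam x + MA q a lam y"
  and MA_diff: "MA q a lam (x - y) = MA q a lam x - MA q a lam y"
  and MA_smult: "MA q a lam (smult k x) = smult k (MA q a lam x)"
  by (rule poly_eqI, simp add: coeff_MA algebra_simps)+

lemma MB_add: "MB q a b c lam (x + y) = MB q a b c lam x + MB q a b c lam y"
  and MB_diff: "MB q a b c lam (x - y) = MB q a b c lam x - MB q a b c lam y"
  and MB_smult: "MB q a b c lam (smult k x) = smult k (MB q a b c lam x)"
  by (rule poly_eqI, simp add: coeff_MB algebra_simps)+

lemma MC_add: "MC q a b c lam (x + y) = MC q a b c lam x + MC q a b c lam y"
  and MC_smult: "MC q a b c lam (smult k x) = smult k (MC q a b c lam x)"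
  by (simp_all add: MC_def MA_add MB_add MA_smult MB_smult algebra_simps smult_add_right
      smult_diff_right)

lemma MA_monom: "MA q a lam (monom 1 i) = smult (theta q a lam i) (monom 1 i) + monom 1 (Suc i)"
  by (rule poly_eqI) (auto simp: coeff_MA coeff_monom)

lemma MA_monom_mult:
  fixes q :: "'a::field"
  assumes "q ^ (2 * n) = 1"
  shows "MA q a lam (monom 1 n * p) = monom 1 n * MA q a lam p"
proof (rule poly_eqI)
  fix k
  have "n \<le> k \<Longrightarrow> theta q a lam k = theta q a lam (k - n)"
    using theta_add_period[OF assms, of a lam "k - n"] by simp
  then show "coeff (MA q a lam (monom 1 n * p)) k = coeff (monom 1 n * MA q a lam p) k"
    by (auto simp: coeff_MA coeff_monom_mult Suc_diff_le)
qed

lemma MB_monom_mult: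
  fixes q :: "'a::field"
  assumes "q ^ (2 * n) = 1"
  shows "MB q a b c lam (monom 1 n * p) = monom 1 n * MB q a b c lam p"
proof (rule poly_eqI)
  fix k
  have "n \<le> k \<Longrightarrow> thetas q b lam k = thetas q b lam (k - n)"
    using thetas_add_period[OF assms, of b lam "k - n"] by simp
  moreover have "n \<le> Suc k \<Longrightarrow> phi q a b c lam (Suc k) = phi q a b c lam (Suc k - n)"
    using phi_add_period[OF assms, of a b c lam "Suc k - n"] by simp
  moreover have "phi q a b c lam n = 0"
    using phi_period_eq_0[OF assms] .
  ultimately show "coeff (MB q a b c lam (monom 1 n * p)) k = coeff (monom 1 n * MB q a b c lam p) k"
    by (auto simp: coeff_MB coeff_monom_mult Suc_diff_le not_less less_Suc_eq_le le_Suc_eq)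
qed

lemma MC_mult_commute:
  assumes "\<And>p. MA q a lam (r * p) = r * MA q a lam p"
    and "\<And>p. MB q a b c lam (r * p) = r * MB q a b c lam p"
  shows "MC q a b c lam (r * p) = r * MC q a b c lam p"
  by (simp add: MC_def assms mult_smult_right right_diff_distrib)

section \<open>The quotient W\<close>

definition relator :: "nat \<Rightarrow> 'a::field \<Rightarrow> 'a poly" where
  "relator d delta = [:delta:] - monom 1 (dprime d)"

lemma relator_mult: "relator d delta * p = smult delta p - monom 1 (dprime d) * p"
  by (simp add: relator_def left_diff_distrib)

lemma MA_relator_mult:
  "q ^ d = 1 \<Longrightarrow> MA q a lam (relator d delta * p) = relator d delta * MA q a lam p"
  by (simp add: relator_mult MA_diff MA_smult MA_monom_mult power_double_dprime_eq_1)

lemma MB_relator_mult: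
  "q ^ d = 1 \<Longrightarrow> MB q a b c lam (relator d delta * p) = relator d delta * MB q a b c lam p"
  by (simp add: relator_mult MB_diff MB_smult MB_monom_mult power_double_dprime_eq_1)

lemma MC_relator_mult:
  "q ^ d = 1 \<Longrightarrow> MC q a b c lam (relator d delta * p) = relator d delta * MC q a b c lam p"
  by (intro MC_mult_commute MA_relator_mult MB_relator_mult)

lemma tri_hom_relator_mult:
  "q ^ d = 1 \<Longrightarrow> tri_hom (Mmod q a b c lam) (Mmod q a b c lam) ((*) (relator d delta))"
  by (simp add: tri_hom_def Mmod_def MA_relator_mult MB_relator_mult MC_relator_mult
      distrib_left mult_smult_right)

lemma relator_mult_monom:
  "relator d delta * monom k i = smult k (smult delta (monom 1 i) - monom 1 (dprime d + i))"
  by (simp add: relator_mult smult_monom mult_monom smult_diff_right mult.commute[of k delta])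

lemma Wspan_eq: "Wspan d delta = {relator d delta * r | r. True}"
proof -
  have "Wspan d delta = {relator d delta * (\<Sum>i\<in>S. monom (k i) i) | S k. finite S}"
    unfolding Wspan_def by (simp add: relator_mult_monom sum_distrib_left)
  also have "\<dots> = {relator d delta * r | r. True}"
  proof (intro Collect_cong iffI)
    fix p
    assume "\<exists>r. p = relator d delta * r \<and> True"
    then obtain r where "p = relator d delta * r"
      by blast
    then have "p = relator d delta * (\<Sum>i\<le>degree r. monom (coeff r i) i)"
      by (simp add: poly_as_sum_of_monoms)
    then show "\<exists>S k. p = relator d delta * (\<Sum>i\<in>S. monom (k i) i) \<and> finite S"
      by blast
  qed blast
  finally show ?thesis .
qed

lemma mem_Wspan_iff: "p \<in> Wspan d delta \<longleftrightarrow> relator d delta dvd p"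
  by (auto simp: Wspan_eq)

lemma mem_coset_iff: "x \<in> coset d delta p \<longleftrightarrow> relator d delta dvd x - p"
proof -
  have "x \<in> coset d delta p \<longleftrightarrow> (\<exists>n. x = p + n \<and> relator d delta dvd n)"
    by (simp add: coset_def mem_Wspan_iff)
  also have "\<dots> \<longleftrightarrow> relator d delta dvd x - p"
    by (metis add_diff_cancel_left' diff_add_cancel add.commute)
  finally show ?thesis .
qed

lemma coset_eq_iff: "coset d delta p = coset d delta r \<longleftrightarrow> relator d delta dvd p - r"
proof
  assume "coset d delta p = coset d delta r"
  then show "relator d delta dvd p - r"
    using mem_coset_iff[of p d delta p] by (simp add: mem_coset_iff)
next
  assume "relator d delta dvd p - r"
  then have "relator d delta dvd x - p \<longleftrightarrow> relator d delta dvd x - r" for x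
    by (metis diff_add_cancel diff_diff_eq2 dvd_add dvd_diff)
  then show "coset d delta p = coset d delta r"
    by (auto simp: mem_coset_iff)
qed

lemma coset_image:
  assumes add: "\<And>x y. F (x + y) = F x + F y"
    and dvd: "\<And>x. relator d delta dvd x \<Longrightarrow> relator d delta dvd F x"
  shows "{F x + n | x n. x \<in> coset d delta p \<and> n \<in> Wspan d delta} = coset d delta (F p)"
proof (intro set_eqI iffI)
  fix z
  assume "z \<in> {F x + n | x n. x \<in> coset d delta p \<and> n \<in> Wspan d delta}"
  then obtain x n where z: "z = F x + n" "relator d delta dvd x - p" "relator d delta dvd n"
    by (auto simp: mem_coset_iff mem_Wspan_iff)
  have "F x = F p + F (x - p)"
    using add[of p "x - p"] by simp
  then have "z - F p = F (x - p) + n"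
    using z(1) by simp
  then show "z \<in> coset d delta (F p)"
    using dvd[OF z(2)] z(3) by (simp add: mem_coset_iff)
next
  fix z
  assume "z \<in> coset d delta (F p)"
  then have "z - F p \<in> Wspan d delta"
    by (simp add: mem_coset_iff mem_Wspan_iff)
  moreover have "p \<in> coset d delta p"
    by (simp add: mem_coset_iff)
  ultimately show "z \<in> {F x + n | x n. x \<in> coset d delta p \<and> n \<in> Wspan d delta}"
    by (intro CollectI exI[of _ p] exI[of _ "z - F p"]) simp
qed

lemma W_car: "car (Wmod q d a b c lam delta) = range (coset d delta)"
  by (auto simp: Wmod_def)

lemma W_zer: "zer (Wmod q d a b c lam delta) = coset d delta 0"
  by (auto simp: Wmod_def coset_def)

lemma W_add:
  "add (Wmod q d a b c lam delta) (coset d delta p) (coset d delta r) = coset d delta (p + r)"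
proof (intro set_eqI iffI)
  fix z
  assume "z \<in> add (Wmod q d a b c lam delta) (coset d delta p) (coset d delta r)"
  then obtain x y n where z: "z = x + y + n" "relator d delta dvd x - p"
    "relator d delta dvd y - r" "relator d delta dvd n"
    by (auto simp: Wmod_def mem_coset_iff mem_Wspan_iff)
  have "z - (p + r) = (x - p) + (y - r) + n"
    using z(1) by simp
  then show "z \<in> coset d delta (p + r)"
    unfolding mem_coset_iff using z(2-4) by (metis dvd_add)
next
  fix z
  assume "z \<in> coset d delta (p + r)"
  then have "z - (p + r) \<in> Wspan d delta"
    by (simp add: mem_coset_iff mem_Wspan_iff)
  moreover have "p \<in> coset d delta p" "r \<in> coset d delta r"
    by (simp_all add: mem_coset_iff)
  ultimately show "z \<in> add (Wmod q d a b c lam delta) (coset d delta p) (coset d delta r)"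
    unfolding Wmod_def tmod.simps by (intro CollectI exI[of _ p] exI[of _ r] exI[of _ "z - (p + r)"]) simp
qed

lemma W_smul: "smul (Wmod q d a b c lam delta) t (coset d delta p) = coset d delta (smult t p)"
  unfolding Wmod_def tmod.simps by (rule coset_image) (simp_all add: smult_add_right dvd_smult)

lemma W_actA:
  "q ^ d = 1 \<Longrightarrow> actA (Wmod q d a b c lam delta) (coset d delta p) = coset d delta (MA q a lam p)"
  unfolding Wmod_def tmod.simps by (rule coset_image) (auto simp: MA_add MA_relator_mult)

lemma W_actB:
  "q ^ d = 1 \<Longrightarrow> actB (Wmod q d a b c lam delta) (coset d delta p) = coset d delta (MB q a b c lam p)"
  unfolding Wmod_def tmod.simps by (rule coset_image) (auto simp: MB_add MB_relator_mult)

lemma W_actC: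
  "q ^ d = 1 \<Longrightarrow> actC (Wmod q d a b c lam delta) (coset d delta p) = coset d delta (MC q a b c lam p)"
  unfolding Wmod_def tmod.simps by (rule coset_image) (auto simp: MC_add MC_relator_mult)

lemma tri_hom_coset:
  "q ^ d = 1 \<Longrightarrow> tri_hom (Mmod q a b c lam) (Wmod q d a b c lam delta) (coset d delta)"
  by (simp add: tri_hom_def Mmod_def W_car W_add W_smul W_actA W_actB W_actC)

section \<open>The Newton basis\<close>

lemma linear_poly_map_sum:
  fixes F :: "'a::comm_ring_1 poly \<Rightarrow> 'a poly"
  assumes add: "\<And>x y. F (x + y) = F x + F y" and smult: "\<And>k x. F (smult k x) = smult k (F x)"
  shows "F (\<Sum>i\<in>S. smult (k i) (g i)) = (\<Sum>i\<in>S. smult (k i) (F (g i)))"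
proof (induction S rule: infinite_finite_induct)
  case (insert i S)
  then show ?case
    by (simp add: add smult)
qed (use smult[of 0 0] in simp_all)

lemma linear_poly_map_eqI:
  fixes F G :: "'a::comm_ring_1 poly \<Rightarrow> 'a poly"
  assumes "\<And>x y. F (x + y) = F x + F y" "\<And>k x. F (smult k x) = smult k (F x)"
    and "\<And>x y. G (x + y) = G x + G y" "\<And>k x. G (smult k x) = smult k (G x)"
    and "\<And>i. F (monom 1 i) = G (monom 1 i)"
  shows "F p = G p"
proof -
  have p: "p = (\<Sum>i\<le>degree p. smult (coeff p i) (monom 1 i))"
    by (simp add: smult_monom poly_as_sum_of_monoms)
  show ?thesis
    by (subst (1 2) p) (simp add: linear_poly_map_sum assms)
qed

definition newton_poly :: "(nat \<Rightarrow> 'a::field) \<Rightarrow> nat \<Rightarrow> 'a poly" where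
  "newton_poly th i = (\<Prod>j<i. [:-th j, 1:])"

text \<open>\<open>from_newton th p\<close> has the coefficients of \<open>p\<close> as coordinates in the Newton basis; for
  \<open>th = theta q a lam\<close> it identifies \<open>M\<^sub>\<lambda>(a,b,c)\<close> with \<open>\<bbbF>[x]\<close>, \<open>A\<close> becoming multiplication by \<open>x\<close>
  (\<open>from_newton_MA\<close>). \<open>newton_apply F th k\<close> is \<open>newton_poly th k\<close> evaluated at \<open>F\<close>.\<close>

definition from_newton :: "(nat \<Rightarrow> 'a::field) \<Rightarrow> 'a poly \<Rightarrow> 'a poly" where
  "from_newton th p = (\<Sum>i\<le>degree p. smult (coeff p i) (newton_poly th i))"

primrec newton_apply ::
  "('a::comm_ring_1 poly \<Rightarrow> 'a poly) \<Rightarrow> (nat \<Rightarrow> 'a) \<Rightarrow> nat \<Rightarrow> 'a poly \<Rightarrow> 'a poly" where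
  "newton_apply F th 0 v = v"
| "newton_apply F th (Suc k) v = F (newton_apply F th k v) - smult (th k) (newton_apply F th k v)"

lemma newton_poly_Suc: "newton_poly th (Suc i) = newton_poly th i * [:-th i, 1:]"
  by (simp add: newton_poly_def)

lemma degree_newton_poly: "degree (newton_poly th i) = i"
  by (simp add: newton_poly_def degree_prod_eq_sum_degree)

lemma coeff_newton_poly_degree: "coeff (newton_poly th i) i = 1"
  using lead_coeff_prod[of "\<lambda>j. [:-th j, 1:]" "{..<i}"]
  by (simp add: degree_newton_poly flip: newton_poly_def)

lemma newton_poly_add_period:
  assumes "\<And>i. th (n + i) = th i"
  shows "newton_poly th (n + i) = newton_poly th n * newton_poly th i"
proof (induction i)
  case (Suc i)
  have "newton_poly th (n + Suc i) = newton_poly th (n + i) * [:-th (n + i), 1:]"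
    by (simp add: newton_poly_Suc)
  also have "\<dots> = newton_poly th n * newton_poly th (Suc i)"
    by (simp only: Suc.IH assms newton_poly_Suc mult.assoc)
  finally show ?case .
qed (simp add: newton_poly_def)

lemma from_newton_eq_sum_lessThan:
  "degree p < N \<Longrightarrow> from_newton th p = (\<Sum>i<N. smult (coeff p i) (newton_poly th i))"
  unfolding from_newton_def by (intro sum.mono_neutral_left) (auto simp: coeff_eq_0)

lemma from_newton_add: "from_newton th (x + y) = from_newton th x + from_newton th y"
proof -
  define N where "N = Suc (max (degree x) (degree y))"
  have "degree (x + y) < N" "degree x < N" "degree y < N"
    using degree_add_le_max[of x y] by (auto simp: N_def)
  then show ?thesis
    by (simp add: from_newton_eq_sum_lessThan[of _ N] smult_add_left sum.distrib)
qed

lemma from_newton_smult: "from_newton th (smult k x) = smult k (from_newton th x)"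
proof -
  have "degree (smult k x) < Suc (degree x)"
    using degree_smult_le[of k x] by auto
  then show ?thesis
    by (simp add: from_newton_eq_sum_lessThan[of _ "Suc (degree x)"] linear_poly_map_sum[of "smult k"]
        smult_add_right smult_smult mult.commute)
qed

lemma from_newton_diff: "from_newton th (x - y) = from_newton th x - from_newton th y"
  using from_newton_add[of th "x - y" y] by simp

lemma from_newton_monom: "from_newton th (monom 1 i) = newton_poly th i"
proof -
  have "from_newton th (monom 1 i) = (\<Sum>j\<le>i. if j = i then newton_poly th j else 0)"
    unfolding from_newton_def by (intro sum.cong) (auto simp: degree_monom_eq coeff_monom)
  then show ?thesis
    by simp
qed

lemma from_newton_eq_0_iff: "from_newton th p = 0 \<longleftrightarrow> p = 0"
proof
  assume "from_newton th p = 0"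
  have "coeff (from_newton th p) (degree p) = (\<Sum>i\<le>degree p. coeff p i * coeff (newton_poly th i) (degree p))"
    by (simp add: from_newton_def coeff_sum)
  also have "\<dots> = lead_coeff p"
    by (subst sum.remove[of _ "degree p"])
      (auto simp: coeff_newton_poly_degree coeff_eq_0 degree_newton_poly intro!: sum.neutral)
  finally show "p = 0"
    using \<open>from_newton th p = 0\<close> by simp
qed (simp add: from_newton_def)

lemma from_newton_MA:
  "from_newton (theta q a lam) (MA q a lam p) = [:0, 1:] * from_newton (theta q a lam) p"
proof (rule linear_poly_map_eqI[where F = "\<lambda>p. from_newton (theta q a lam) (MA q a lam p)"])
  fix i
  show "from_newton (theta q a lam) (MA q a lam (monom 1 i))
      = [:0, 1:] * from_newton (theta q a lam) (monom 1 i)"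
    by (simp add: MA_monom from_newton_add from_newton_smult from_newton_monom newton_poly_Suc
        algebra_simps)
qed (simp_all add: from_newton_add from_newton_smult MA_add MA_smult algebra_simps)

lemma from_newton_newton_apply:
  "from_newton (theta q a lam) (newton_apply (MA q a lam) th k p)
     = newton_poly th k * from_newton (theta q a lam) p"
  by (induction k) (simp_all add: newton_poly_def[of th 0] newton_poly_Suc from_newton_diff
      from_newton_smult from_newton_MA algebra_simps)

lemma from_newton_monom_mult:
  assumes "\<And>i. th (n + i) = th i"
  shows "from_newton th (monom 1 n * p) = newton_poly th n * from_newton th p"
proof (rule linear_poly_map_eqI[where F = "\<lambda>p. from_newton th (monom 1 n * p)"])
  fix i
  show "from_newton th (monom 1 n * monom 1 i) = newton_poly th n * from_newton th (monom 1 i)"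
    by (simp add: mult_monom from_newton_monom newton_poly_add_period[of th n, OF assms])
qed (simp_all add: from_newton_add from_newton_smult algebra_simps)

definition dickson_const :: "'a::field \<Rightarrow> 'a \<Rightarrow> nat \<Rightarrow> 'a" where
  "dickson_const a lam n = a ^ n * inverse lam ^ n + inverse a ^ n * lam ^ n"

lemma newton_poly_theta_dickson:
  fixes q :: "'a::alg_closed_field"
  assumes "0 < d" "q ^ d = 1" "\<forall>k. 0 < k \<and> k < d \<longrightarrow> q ^ k \<noteq> 1"
    and "a \<noteq> 0" "lam \<noteq> 0" "a' \<noteq> 0" "lam' \<noteq> 0"
  shows "newton_poly (theta q a lam) (dprime d) + [:dickson_const a lam (dprime d):]
       = newton_poly (theta q a' lam') (dprime d) + [:dickson_const a' lam' (dprime d):]"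
proof -
  have theta: "newton_poly (theta q a lam) n
      = (\<Prod>i<n. [:-(a * inverse lam * (q ^ 2) ^ i + inverse (a * inverse lam * (q ^ 2) ^ i)), 1:])"
    and const: "dickson_const a lam n = (a * inverse lam) ^ n + inverse (a * inverse lam) ^ n"
    for a lam :: 'a and n
    by (simp_all add: newton_poly_def theta_def dickson_const_def power_mult power_inverse
        power_mult_distrib mult.assoc)
  have "(q ^ 2) ^ dprime d = 1"
    using power_double_dprime_eq_1[OF assms(2)] by (simp add: power_mult)
  then show ?thesis
    unfolding theta const
    by (rule dickson_identity[OF dprime_pos[OF assms(1)] _ primitive_root_square[OF assms(2,3)]])
      (use assms in simp_all)
qed

lemma newton_apply_MA_theta:
  fixes q :: "'a::alg_closed_field"
  assumes "0 < d" "q ^ d = 1" "\<forall>k. 0 < k \<and> k < d \<longrightarrow> q ^ k \<noteq> 1"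
    and "a \<noteq> 0" "lam \<noteq> 0" "a' \<noteq> 0" "lam' \<noteq> 0"
  shows "newton_apply (MA q a' lam') (theta q a lam) (dprime d) p
       = smult (dickson_const a' lam' (dprime d) - dickson_const a lam (dprime d)) p
         + monom 1 (dprime d) * p"
    (is "?lhs = smult ?c p + ?shift")
proof -
  let ?th = "theta q a' lam'"
  have "newton_poly (theta q a lam) (dprime d)
      = newton_poly ?th (dprime d) + [:dickson_const a' lam' (dprime d):] - [:dickson_const a lam (dprime d):]"
    using newton_poly_theta_dickson[OF assms] by (simp add: eq_diff_eq)
  then have "newton_poly (theta q a lam) (dprime d) = newton_poly ?th (dprime d) + [:?c:]"
    by (simp add: add_diff_eq[symmetric])
  then have "from_newton ?th ?lhs = smult ?c (from_newton ?th p) + newton_poly ?th (dprime d) * from_newton ?th p"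
    by (simp add: from_newton_newton_apply algebra_simps)
  also have "\<dots> = from_newton ?th (smult ?c p + ?shift)"
    using theta_add_period[OF power_double_dprime_eq_1[OF assms(2)]]
    by (simp add: from_newton_add from_newton_smult from_newton_monom_mult)
  finally show ?thesis
    using from_newton_eq_0_iff[of ?th "?lhs - (smult ?c p + ?shift)"] by (simp add: from_newton_diff)
qed

section \<open>Homomorphisms\<close>

lemma tri_hom_comp: "tri_hom L M f \<Longrightarrow> tri_hom M N g \<Longrightarrow> tri_hom L N (g \<circ> f)"
  by (simp add: tri_hom_def)

lemma tri_hom_MmodD:
  assumes "tri_hom (Mmod q a b c lam) N g"
  shows "g x \<in> car N" "g (x + y) = add N (g x) (g y)" "g (smult k x) = smul N k (g x)"
    "g (MA q a lam x) = actA N (g x)" "g (MB q a b c lam x) = actB N (g x)"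
    "g (MC q a b c lam x) = actC N (g x)"
  using assms by (simp_all add: tri_hom_def Mmod_def)

lemma tri_hom_Wmod_eq_zero:
  assumes "tri_hom L (Wmod q d a b c lam delta) f" "x \<in> car L" "smul L 0 x = x"
  shows "f x = coset d delta 0"
proof -
  obtain u where "f x = coset d delta u"
    using assms(1,2) by (auto simp: tri_hom_def W_car)
  moreover have "f (smul L 0 x) = smul (Wmod q d a b c lam delta) 0 (f x)"
    using assms(1,2) by (simp add: tri_hom_def)
  ultimately show ?thesis
    using assms(3) by (simp add: W_smul)
qed

lemma tri_hom_Mmod_Wmod_sum:
  assumes g: "tri_hom (Mmod q a b c lam) (Wmod q d a' b' c' lam' delta') g"
    and "\<And>i. i \<in> S \<Longrightarrow> g (v i) = coset d delta' (u i)"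
  shows "g (\<Sum>i\<in>S. smult (k i) (v i)) = coset d delta' (\<Sum>i\<in>S. smult (k i) (u i))"
  using assms(2)
proof (induction S rule: infinite_finite_induct)
  case (insert i S)
  then show ?case
    by (simp add: tri_hom_MmodD[OF g] W_add W_smul)
qed (use tri_hom_Wmod_eq_zero[OF g] in \<open>simp_all add: Mmod_def\<close>)

lemma newton_apply_MA_0: "newton_apply (MA q a lam) th k 0 = 0"
  using MA_smult[of q a lam 0 0] by (induction k) simp_all

lemma tri_hom_Mmod_Wmod_monom:
  assumes "q ^ d = 1" and g: "tri_hom (Mmod q a b c lam) (Wmod q d a' b' c' lam' delta') g"
    and "g 1 = coset d delta' p0"
  shows "g (monom 1 k) = coset d delta' (newton_apply (MA q a' lam') (theta q a lam) k p0)"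
proof (induction k)
  case (Suc k)
  let ?v = "newton_apply (MA q a' lam') (theta q a lam) k p0"
  have "g (monom 1 (Suc k)) = g (MA q a lam (monom 1 k) + smult (- theta q a lam k) (monom 1 k))"
    by (simp add: MA_monom)
  also have "\<dots> = coset d delta' (MA q a' lam' ?v + smult (- theta q a lam k) ?v)"
    unfolding tri_hom_MmodD[OF g] Suc W_actA[OF assms(1)] W_smul W_add ..
  finally show ?case
    by simp
qed (simp add: assms(3))

lemma tri_hom_Mmod_Wmod_eq_zero:
  assumes "q ^ d = 1" and g: "tri_hom (Mmod q a b c lam) (Wmod q d a' b' c' lam' delta') g"
    and "g 1 = coset d delta' 0"
  shows "g p = coset d delta' 0"
proof -
  have "p = (\<Sum>i\<le>degree p. smult (coeff p i) (monom 1 i))"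
    by (simp add: smult_monom poly_as_sum_of_monoms)
  also have "g \<dots> = coset d delta' (\<Sum>i\<le>degree p. smult (coeff p i) 0)"
    using tri_hom_Mmod_Wmod_monom[OF assms] by (intro tri_hom_Mmod_Wmod_sum[OF g])
      (simp add: newton_apply_MA_0)
  finally show ?thesis
    by simp
qed

lemma tri_hom_Mmod_Wmod_relator:
  fixes q :: "'a::alg_closed_field"
  assumes "0 < d" "q ^ d = 1" "\<forall>k. 0 < k \<and> k < d \<longrightarrow> q ^ k \<noteq> 1"
    and "a \<noteq> 0" "lam \<noteq> 0" "a' \<noteq> 0" "lam' \<noteq> 0"
    and g: "tri_hom (Mmod q a b c lam) (Wmod q d a' b' c' lam' delta') g"
    and "g 1 = coset d delta' p0"
  shows "g (relator d delta) = coset d delta' (smult (delta + dickson_const a lam (dprime d)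
           - delta' - dickson_const a' lam' (dprime d)) p0)"
proof -
  let ?v = "newton_apply (MA q a' lam') (theta q a lam) (dprime d) p0"
  have "relator d delta = smult delta 1 + smult (- 1) (monom 1 (dprime d))"
    by (simp add: relator_def monom_0)
  then have "g (relator d delta) = coset d delta' (smult delta p0 + smult (- 1) ?v)"
    using tri_hom_Mmod_Wmod_monom[OF assms(2) g assms(9), of "dprime d"] assms(9)
    by (simp only: tri_hom_MmodD[OF g] W_smul W_add)
  also have "\<dots> = coset d delta' (smult (delta + dickson_const a lam (dprime d)
           - delta' - dickson_const a' lam' (dprime d)) p0)"
    unfolding coset_eq_iff newton_apply_MA_theta[OF assms(1-7)]
    by (rule dvdI[of _ _ p0]) (simp add: relator_def smult_add_left smult_diff_left algebra_simps)
  finally show ?thesis .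
qed

lemma tri_hom_Mmod_Wmod_factor:
  assumes "q ^ d = 1" and g: "tri_hom (Mmod q a b c lam) (Wmod q d a' b' c' lam' delta') g"
    and "g (relator d delta) = coset d delta' 0"
  shows "\<exists>f. tri_hom (Wmod q d a b c lam delta) (Wmod q d a' b' c' lam' delta') f
           \<and> (\<forall>p. f (coset d delta p) = g p)"
proof -
  \<comment> \<open>multiplication by the relator is an endomorphism of \<open>M\<close>\<close>
  have "tri_hom (Mmod q a b c lam) (Wmod q d a' b' c' lam' delta') (g \<circ> (*) (relator d delta))"
    using tri_hom_relator_mult[OF assms(1)] g by (rule tri_hom_comp)
  moreover have "(g \<circ> (*) (relator d delta)) 1 = coset d delta' 0"
    using assms(3) by simp
  ultimately have kill: "g (relator d delta * r) = coset d delta' 0" for r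
    using tri_hom_Mmod_Wmod_eq_zero[OF assms(1)] by (metis comp_apply)
  have "g x = g y" if "coset d delta x = coset d delta y" for x y
  proof -
    obtain r where "x - y = relator d delta * r"
      using \<open>coset d delta x = coset d delta y\<close> by (auto simp: coset_eq_iff)
    then have "x = y + relator d delta * r"
      by (simp add: diff_eq_eq add.commute)
    moreover obtain u where "g y = coset d delta' u"
      using tri_hom_MmodD(1)[OF g] by (auto simp: W_car)
    ultimately show "g x = g y"
      by (simp add: tri_hom_MmodD(2)[OF g] kill W_add)
  qed
  moreover define f where "f X = g (SOME p. X = coset d delta p)" for X
  ultimately have f: "f (coset d delta p) = g p" for p
    by (metis (mono_tags, lifting) someI_ex)
  have "tri_hom (Wmod q d a b c lam delta) (Wmod q d a' b' c' lam' delta') f"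
    using tri_hom_MmodD(1)[OF g]
    unfolding tri_hom_def W_car
    by (simp add: f W_add W_smul W_actA[OF assms(1)] W_actB[OF assms(1)] W_actC[OF assms(1)]
        tri_hom_MmodD(2-6)[OF g])
  then show ?thesis
    using f by blast
qed

lemma tri_hom_Mmod_Wmod_relator_eq_0_iff:
  fixes q :: "'a::alg_closed_field"
  assumes "0 < d" "q ^ d = 1" "\<forall>k. 0 < k \<and> k < d \<longrightarrow> q ^ k \<noteq> 1"
    and "a \<noteq> 0" "lam \<noteq> 0" "a' \<noteq> 0" "lam' \<noteq> 0"
    and g: "tri_hom (Mmod q a b c lam) (Wmod q d a' b' c' lam' delta') g"
    and "g 1 = coset d delta' p0" "\<not> relator d delta' dvd p0"
  shows "g (relator d delta) = coset d delta' 0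
     \<longleftrightarrow> delta + dickson_const a lam (dprime d) = delta' + dickson_const a' lam' (dprime d)"
proof -
  define \<kappa> where "\<kappa> = delta + dickson_const a lam (dprime d) - delta' - dickson_const a' lam' (dprime d)"
  have "g (relator d delta) = coset d delta' (smult \<kappa> p0)"
    unfolding \<kappa>_def by (rule tri_hom_Mmod_Wmod_relator[OF assms(1-9)])
  moreover have "relator d delta' dvd smult \<kappa> p0 \<longleftrightarrow> \<kappa> = 0"
    using assms(10) dvd_smult_cancel[of "relator d delta'" \<kappa> p0] by auto
  ultimately show ?thesis
    by (simp add: coset_eq_iff \<kappa>_def algebra_simps)
qed

lemma tri_hom_Wmod_coset_relator:
  assumes "tri_hom (Wmod q d a b c lam delta) (Wmod q d a' b' c' lam' delta') f"
  shows "f (coset d delta (relator d delta)) = coset d delta' 0"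
proof (rule tri_hom_Wmod_eq_zero[OF assms])
  show "smul (Wmod q d a b c lam delta) 0 (coset d delta (relator d delta))
      = coset d delta (relator d delta)"
    by (simp add: W_smul coset_eq_iff)
qed (simp add: W_car)

lemma tri_hom_Wmod_Wmod_exists_iff:
  fixes q :: "'a::alg_closed_field"
  assumes "0 < d" "q ^ d = 1" "\<forall>k. 0 < k \<and> k < d \<longrightarrow> q ^ k \<noteq> 1"
    and "a \<noteq> 0" "lam \<noteq> 0" "a' \<noteq> 0" "lam' \<noteq> 0"
    and "\<not> relator d delta' dvd p0"
  shows "(\<exists>f. tri_hom (Wmod q d a b c lam delta) (Wmod q d a' b' c' lam' delta') f
              \<and> f (coset d delta 1) = coset d delta' p0)
     \<longleftrightarrow> (\<exists>g. tri_hom (Mmod q a b c lam) (Wmod q d a' b' c' lam' delta') g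
              \<and> g 1 = coset d delta' p0)
         \<and> delta + dickson_const a lam (dprime d) = delta' + dickson_const a' lam' (dprime d)"
    (is "?W \<longleftrightarrow> ?M \<and> ?cond")
proof
  assume ?W
  then obtain f where f: "tri_hom (Wmod q d a b c lam delta) (Wmod q d a' b' c' lam' delta') f"
    and "f (coset d delta 1) = coset d delta' p0"
    by blast
  then have g: "tri_hom (Mmod q a b c lam) (Wmod q d a' b' c' lam' delta') (f \<circ> coset d delta)"
    and "(f \<circ> coset d delta) 1 = coset d delta' p0"
    using tri_hom_comp[OF tri_hom_coset[OF assms(2)]] by auto
  moreover have "(f \<circ> coset d delta) (relator d delta) = coset d delta' 0"
    using tri_hom_Wmod_coset_relator[OF f] by simp
  ultimately show "?M \<and> ?cond"
    using tri_hom_Mmod_Wmod_relator_eq_0_iff[OF assms(1-7) g _ assms(8)] by blast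
next
  assume "?M \<and> ?cond"
  then obtain g where g: "tri_hom (Mmod q a b c lam) (Wmod q d a' b' c' lam' delta') g"
    and "g 1 = coset d delta' p0" ?cond
    by blast
  then have "g (relator d delta) = coset d delta' 0"
    using tri_hom_Mmod_Wmod_relator_eq_0_iff[OF assms(1-7) g _ assms(8)] by blast
  then obtain f where "tri_hom (Wmod q d a b c lam delta) (Wmod q d a' b' c' lam' delta') f"
    and "\<forall>p. f (coset d delta p) = g p"
    using tri_hom_Mmod_Wmod_factor[OF assms(2) g] by blast
  then show ?W
    using \<open>g 1 = coset d delta' p0\<close> by auto
qed

theorem proposition7p3:
  fixes q :: "'a::alg_closed_field" and d :: nat
    and a b c lam delta a' b' c' lam' delta' :: 'a
    and wbar :: "'a poly set"
  assumes "0 < d" and "q ^ d = 1" and "\<forall>k. 0 < k \<and> k < d \<longrightarrow> q ^ k \<noteq> 1"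
    and "d \<notin> {1, 2, 4}"
    and "a \<noteq> 0" "b \<noteq> 0" "c \<noteq> 0" "lam \<noteq> 0"
    and "a' \<noteq> 0" "b' \<noteq> 0" "c' \<noteq> 0" "lam' \<noteq> 0"
    and "wbar \<in> car (Wmod q d a' b' c' lam' delta')"
    and "wbar \<noteq> zer (Wmod q d a' b' c' lam' delta')"
  shows "(\<exists>f. tri_hom (Wmod q d a b c lam delta) (Wmod q d a' b' c' lam' delta') f
              \<and> f (coset d delta (monom 1 0)) = wbar)
     \<longleftrightarrow> ((\<exists>g. tri_hom (Mmod q a b c lam) (Wmod q d a' b' c' lam' delta') g
               \<and> g (monom 1 0) = wbar)
          \<and> delta + a ^ dprime d * inverse lam ^ dprime d + inverse a ^ dprime d * lam ^ dprime d
            = delta' + a' ^ dprime d * inverse lam' ^ dprime d + inverse a' ^ dprime d * lam' ^ dprime d)"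
proof -
  obtain p0 where wbar: "wbar = coset d delta' p0"
    using assms(13) by (auto simp: W_car)
  have "\<not> relator d delta' dvd p0"
    using assms(14) by (simp add: wbar W_zer coset_eq_iff)
  then show ?thesis
    using tri_hom_Wmod_Wmod_exists_iff[OF assms(1-3,5,8,9,12)]
    by (simp add: wbar dickson_const_def add.assoc)
qed

end
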